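(* Let $(\mathscr{P},\mathscr{B},\mathrm{I})$ be a linear space with incidence graph $\Gamma$, and let $\varphi$ be a gain function on $\Gamma$ with gain group $G$ acting on the left on a nonempty set $\Lambda$. Let $p,q\in\mathscr{P}$, $b\in\mathscr{B}$ and $\lambda,\mu\in\Lambda$. In $\mathfrak{M}(\Gamma,\varphi)$: (1) if $p=q$, then $d(x_p,z_{q,\lambda})=1$ and $(x_p,z_{q,\lambda})$ is the unique $1$-chain from $x_p$ to $z_{q,\lambda}$; (2) if $p\ne q$, then $d(x_p,z_{q,\lambda})=3$ and there is a unique $3$-chain from $x_p$ to $z_{q,\lambda}$; (3) if $b\ \mathrm{I}\ p$ and $\mu=\varphi(bp)\cdot\lambda$, then $d(y_{b,\lambda},z_{p,\mu})=1$ and $(y_{b,\lambda},z_{p,\mu})$ is the unique $1$-chain from $y_{b,\lambda}$ to $z_{p,\mu}$; (4) if $b\ \mathrm{I}\ p$ and $\mu\ne\varphi(bp)\cdot\lambda$, then $d(y_{b,\lambda},z_{p,\mu})=3$ and there is a unique $3$-chain from $y_{b,\lambda}$ to $z_{p,\mu}$.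
   Context: An incidence structure is a triple $(\mathscr{P},\mathscr{B},\mathrm{I})$ where $\mathscr{P}$ (points) and $\mathscr{B}$ (lines) are nonempty disjoint sets and $\mathrm{I}\subseteq\mathscr{P}\times\mathscr{B}$ is a nonempty incidence relation; write $p\ \mathrm{I}\ b$ when $(p,b)\in\mathrm{I}$. It is a linear space if any two distinct points are incident with exactly one common line, each line is incident with at least two points, and some point and line are not incident. The incidence graph $\Gamma$ is the bipartite graph with vertex set $\mathscr{P}\cup\mathscr{B}$ and an edge $bp$ for each incident pair; every edge is oriented from its line to its point. A gain function with gain group $G$ assigns to each edge $e$ an element $\varphi(e)\in G$. The group $G$ acts on $\Lambda$ on the left. Construction $\mathfrak{M}(\Gamma,\varphi)$: the incidence structure whose points are the formal symbols $x_p$ ($p\in\mathscr{P}$) and $y_{b,\lambda}$ ($b\in\mathscr{B},\lambda\in\Lambda$), whose lines are the formal symbols $z_{p,\lambda}$ ($p\in\mathscr{P},\lambda\in\Lambda$), and whose incidences are exactly: $x_p$ incident with $z_{p,\lambda}$ for all $\lambda$, and $y_{b,\lambda}$ incident with $z_{p,\mu}$ whenever $b\ \mathrm{I}\ p$ and $\mu=\varphi(bp)\cdot\lambda$. A $k$-chain is a sequence $(u_0,\dots,u_k)$ of points/lines with $u_i$ incident with $u_{i-1}$ for $1\le i\le k$; $d(u,v)$ is the least $k$ such that a $k$-chain from $u$ to $v$ exists ($\infty$ if none). *)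

theory Defs
  imports "HOL-Algebra.Group_Action" "HOL-Library.Extended_Nat"
begin

text \<open>Linear space (P, B, I): points of type 'p, lines of type 'b (so P and B are
  automatically disjoint), incidence I a set of pairs (point, line).\<close>
definition linear_space :: "'p set \<Rightarrow> 'b set \<Rightarrow> ('p \<times> 'b) set \<Rightarrow> bool" where
  "linear_space P B I \<longleftrightarrow>
     P \<noteq> {} \<and> B \<noteq> {} \<and> I \<noteq> {} \<and> I \<subseteq> P \<times> B \<and>
     (\<forall>p\<in>P. \<forall>q\<in>P. p \<noteq> q \<longrightarrow> (\<exists>!b. b \<in> B \<and> (p, b) \<in> I \<and> (q, b) \<in> I)) \<and>
     (\<forall>b\<in>B. \<exists>p\<in>P. \<exists>q\<in>P. p \<noteq> q \<and> (p, b) \<in> I \<and> (q, b) \<in> I) \<and>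
     (\<exists>p\<in>P. \<exists>b\<in>B. (p, b) \<notin> I)"

text \<open>Gain function on the incidence graph: the edge bp (oriented from line b to
  point p) gets the gain gain b p in carrier G.\<close>
definition gain_function :: "('g, 'c) monoid_scheme \<Rightarrow> 'p set \<Rightarrow> 'b set \<Rightarrow> ('p \<times> 'b) set
     \<Rightarrow> ('b \<Rightarrow> 'p \<Rightarrow> 'g) \<Rightarrow> bool" where
  "gain_function G P B I gain \<longleftrightarrow> group G \<and> (\<forall>(p, b)\<in>I. gain b p \<in> carrier G)"

text \<open>Elements (points and lines) of the structure M(Gamma, phi):
  MX p = x_p, MY b l = y_{b,l} (points), MZ p l = z_{p,l} (lines).\<close>
datatype ('p, 'b, 'l) melt = MX 'p | MY 'b 'l | MZ 'p 'l

fun M_inc :: "'p set \<Rightarrow> 'b set \<Rightarrow> ('p \<times> 'b) set \<Rightarrow> ('b \<Rightarrow> 'p \<Rightarrow> 'g) \<Rightarrow> ('g \<Rightarrow> 'l \<Rightarrow> 'l)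
     \<Rightarrow> 'l set \<Rightarrow> ('p, 'b, 'l) melt \<Rightarrow> ('p, 'b, 'l) melt \<Rightarrow> bool" where
  "M_inc P B I gain act L (MX p) (MZ p' l) \<longleftrightarrow> p \<in> P \<and> p' = p \<and> l \<in> L"
| "M_inc P B I gain act L (MY b l) (MZ p m) \<longleftrightarrow>
     b \<in> B \<and> l \<in> L \<and> p \<in> P \<and> m \<in> L \<and> (p, b) \<in> I \<and> m = act (gain b p) l"
| "M_inc P B I gain act L _ _ \<longleftrightarrow> False"

definition M_adj where
  "M_adj P B I gain act L u v \<longleftrightarrow> M_inc P B I gain act L u v \<or> M_inc P B I gain act L v u"

definition M_chain where
  "M_chain P B I gain act L k u v us \<longleftrightarrow>
     length us = Suc k \<and> us ! 0 = u \<and> us ! k = v \<and>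
     (\<forall>i<k. M_adj P B I gain act L (us ! Suc i) (us ! i))"

definition M_dist :: "'p set \<Rightarrow> 'b set \<Rightarrow> ('p \<times> 'b) set \<Rightarrow> ('b \<Rightarrow> 'p \<Rightarrow> 'g) \<Rightarrow> ('g \<Rightarrow> 'l \<Rightarrow> 'l)
     \<Rightarrow> 'l set \<Rightarrow> ('p, 'b, 'l) melt \<Rightarrow> ('p, 'b, 'l) melt \<Rightarrow> enat" where
  "M_dist P B I gain act L u v =
     (if \<exists>k us. M_chain P B I gain act L k u v us
      then enat (LEAST k. \<exists>us. M_chain P B I gain act L k u v us) else \<infinity>)"

end

theory Submission
  imports Defs
begin

text \<open>The incidence graph of \<open>M(\<Gamma>, \<phi>)\<close> is bipartite between points and lines, so the
  distance from a point to a line is odd, and it is \<open>1\<close> exactly for incident pairs.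
  A 3-chain \<open>x_p, z_{p,\<nu>}, y_{c,\<kappa>}, z_{q,\<lambda>}\<close> with \<open>p \<noteq> q\<close> forces \<open>c\<close> to be the line
  joining \<open>p\<close> and \<open>q\<close>; since every gain acts bijectively on \<open>\<Lambda>\<close>, the labels \<open>\<kappa>\<close> and
  \<open>\<nu>\<close> are then determined by \<open>\<lambda>\<close>. A 3-chain \<open>y_{b,\<lambda>}, z_{p',\<nu>}, y_{c,\<kappa>}, z_{p,\<mu>}\<close> is
  impossible when \<open>\<mu> \<noteq> \<phi>(bp)\<lambda>\<close>: for \<open>p' = p\<close> it gives \<open>\<nu> = \<mu>\<close>, and for \<open>p' \<noteq> p\<close>
  it gives \<open>c = b\<close> and \<open>\<kappa> = \<lambda>\<close>, both contradicting \<open>\<mu> \<noteq> \<phi>(bp)\<lambda>\<close>. So the only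
  3-chain passes through \<open>x_p\<close>.\<close>

locale M_incidence =
  fixes P :: "'p set" and B :: "'b set" and I :: "('p \<times> 'b) set"
    and gain :: "'b \<Rightarrow> 'p \<Rightarrow> 'g" and act :: "'g \<Rightarrow> 'l \<Rightarrow> 'l" and L :: "'l set"
begin

abbreviation "adj \<equiv> M_adj P B I gain act L"
abbreviation "chain \<equiv> M_chain P B I gain act L"
abbreviation "mdist \<equiv> M_dist P B I gain act L"

lemma adj_simps [simp]:
  "adj (MX p) (MZ q l) \<longleftrightarrow> p \<in> P \<and> q = p \<and> l \<in> L"
  "adj (MZ q l) (MX p) \<longleftrightarrow> p \<in> P \<and> q = p \<and> l \<in> L"
  "adj (MY b l) (MZ p m) \<longleftrightarrow>
     b \<in> B \<and> l \<in> L \<and> p \<in> P \<and> m \<in> L \<and> (p, b) \<in> I \<and> m = act (gain b p) l"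
  "adj (MZ p m) (MY b l) \<longleftrightarrow>
     b \<in> B \<and> l \<in> L \<and> p \<in> P \<and> m \<in> L \<and> (p, b) \<in> I \<and> m = act (gain b p) l"
  "\<not> adj (MX p) (MX q)" "\<not> adj (MX p) (MY b l)" "\<not> adj (MY b l) (MX p)"
  "\<not> adj (MY b l) (MY c m)" "\<not> adj (MZ p l) (MZ q m)"
  by (auto simp: M_adj_def)

lemma adj_irrefl: "\<not> adj u u"
  by (cases u) simp_all

lemma chain_0_iff: "chain 0 u v us \<longleftrightarrow> us = [u] \<and> u = v"
  by (auto simp: M_chain_def length_Suc_conv)

lemma chain_1_iff: "chain 1 u v us \<longleftrightarrow> us = [u, v] \<and> adj v u"
  by (auto simp: M_chain_def length_Suc_conv)

lemma chain_2_iff: "chain 2 u v us \<longleftrightarrow> (\<exists>w. us = [u, w, v] \<and> adj w u \<and> adj v w)"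
  by (auto simp: M_chain_def length_Suc_conv numeral_eq_Suc less_Suc_eq)

lemma chain_3_iff:
  "chain 3 u v us \<longleftrightarrow> (\<exists>w x. us = [u, w, x, v] \<and> adj w u \<and> adj x w \<and> adj v x)"
  by (auto simp: M_chain_def length_Suc_conv numeral_eq_Suc less_Suc_eq)

lemma chain_2_to_MZ_from_MZ:
  assumes "chain 2 u (MZ q l) us"
  shows "\<exists>q' l'. u = MZ q' l'"
proof -
  from assms obtain w where "adj w u" and "adj (MZ q l) w"
    unfolding chain_2_iff by blast
  then show ?thesis
    by (cases w; cases u) auto
qed

lemma mdist_eqI:
  assumes "chain k u v us" and "\<And>j vs. j < k \<Longrightarrow> \<not> chain j u v vs"
  shows "mdist u v = enat k"
proof -
  have "(LEAST k. \<exists>us. chain k u v us) = k"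
    by (rule Least_equality) (use assms in \<open>auto simp: not_less[symmetric]\<close>)
  with assms(1) show ?thesis
    unfolding M_dist_def by auto
qed

lemma mdist_eq_1:
  assumes "adj v u"
  shows "mdist u v = 1"
proof -
  have "mdist u v = enat 1"
  proof (rule mdist_eqI)
    show "chain 1 u v [u, v]"
      using assms chain_1_iff by blast
  qed (use assms adj_irrefl in \<open>auto simp: chain_0_iff\<close>)
  then show ?thesis
    by (simp add: one_enat_def)
qed

lemma mdist_eq_3:
  assumes "\<exists>us. chain 3 u (MZ q l) us" and "\<not> adj (MZ q l) u"
    and "\<And>q' l'. u \<noteq> MZ q' l'"
  shows "mdist u (MZ q l) = 3"
proof -
  have "\<not> chain 2 u (MZ q l) vs" for vs
    using chain_2_to_MZ_from_MZ assms(3) by blast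
  then have "\<not> chain j u (MZ q l) vs" if "j < 3" for j vs
    using that assms chain_1_iff[of u "MZ q l" vs] chain_0_iff[of u "MZ q l" vs]
    by (auto simp: less_Suc_eq numeral_eq_Suc)
  then have "mdist u (MZ q l) = enat 3"
    using mdist_eqI assms(1) by blast
  then show ?thesis
    by (simp add: numeral_eq_enat)
qed

end

locale gain_M_construction = M_incidence P B I gain act L
  for P :: "'p set" and B :: "'b set" and I :: "('p \<times> 'b) set"
    and gain :: "'b \<Rightarrow> 'p \<Rightarrow> 'g" and act :: "'g \<Rightarrow> 'l \<Rightarrow> 'l" and L :: "'l set" +
  fixes G :: "('g, 'c) monoid_scheme"
  assumes linear_space: "linear_space P B I"
    and gain_function: "gain_function G P B I gain"
    and group_action: "group_action G L act"
begin

lemma incidence_subset: "I \<subseteq> P \<times> B"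
  using linear_space unfolding linear_space_def by blast

lemma ex1_line_through:
  "p \<in> P \<Longrightarrow> q \<in> P \<Longrightarrow> p \<noteq> q \<Longrightarrow> \<exists>!c. c \<in> B \<and> (p, c) \<in> I \<and> (q, c) \<in> I"
  using linear_space unfolding linear_space_def by blast

lemma gain_in_carrier: "(p, b) \<in> I \<Longrightarrow> gain b p \<in> carrier G"
  using gain_function unfolding gain_function_def by blast

lemma act_gain_closed: "(p, b) \<in> I \<Longrightarrow> l \<in> L \<Longrightarrow> act (gain b p) l \<in> L"
  using group_action.element_image[OF group_action gain_in_carrier] by blast

lemma act_gain_inj:
  "(p, b) \<in> I \<Longrightarrow> l \<in> L \<Longrightarrow> l' \<in> L \<Longrightarrow> act (gain b p) l = act (gain b p) l' \<Longrightarrow> l = l'"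
  using group_action.inj_prop[OF group_action gain_in_carrier] by (meson inj_onD)

lemma act_gain_surj:
  assumes "(p, b) \<in> I" and "lam \<in> L"
  obtains l where "l \<in> L" and "act (gain b p) l = lam"
  using group_action.bij_prop1[OF group_action gain_in_carrier[OF assms(1)] assms(2)] by blast

lemma chain_3_MX_MZ_iff:
  assumes "p \<noteq> q" and "c \<in> B" "(p, c) \<in> I" "(q, c) \<in> I"
    and "l \<in> L" "act (gain c q) l = lam"
  shows "chain 3 (MX p) (MZ q lam) us \<longleftrightarrow>
    us = [MX p, MZ p (act (gain c p) l), MY c l, MZ q lam]"
proof
  assume "chain 3 (MX p) (MZ q lam) us"
  then obtain w x where us: "us = [MX p, w, x, MZ q lam]"
    and "adj w (MX p)" "adj x w" "adj (MZ q lam) x"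
    unfolding chain_3_iff by blast
  from \<open>adj w (MX p)\<close> obtain \<nu> where w: "w = MZ p \<nu>"
    by (cases w) auto
  from \<open>adj x w\<close> \<open>adj (MZ q lam) x\<close> \<open>p \<noteq> q\<close> obtain c' l' where x: "x = MY c' l'"
    by (cases x) (auto simp: w)
  have "c' \<in> B" "(p, c') \<in> I" "(q, c') \<in> I" "l' \<in> L"
    and "lam = act (gain c' q) l'" "\<nu> = act (gain c' p) l'"
    using \<open>adj x w\<close> \<open>adj (MZ q lam) x\<close> by (simp_all add: w x)
  moreover have "p \<in> P" "q \<in> P"
    using assms(3,4) incidence_subset by auto
  ultimately have "c' = c"
    using ex1_line_through assms(1-4) by blast
  with \<open>l' \<in> L\<close> \<open>lam = act (gain c' q) l'\<close> have "l' = l"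
    using act_gain_inj[OF \<open>(q, c) \<in> I\<close>] assms(5,6) by simp
  with us w x \<open>c' = c\<close> \<open>\<nu> = act (gain c' p) l'\<close>
  show "us = [MX p, MZ p (act (gain c p) l), MY c l, MZ q lam]"
    by simp
next
  assume "us = [MX p, MZ p (act (gain c p) l), MY c l, MZ q lam]"
  moreover have "p \<in> P" "q \<in> P"
    using assms(3,4) incidence_subset by auto
  ultimately show "chain 3 (MX p) (MZ q lam) us"
    using assms act_gain_closed unfolding chain_3_iff by auto
qed

lemma ex1_chain_3_MX_MZ:
  assumes "p \<in> P" "q \<in> P" "p \<noteq> q" "lam \<in> L"
  shows "\<exists>!us. chain 3 (MX p) (MZ q lam) us"
proof -
  obtain c where c: "c \<in> B" "(p, c) \<in> I" "(q, c) \<in> I"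
    using ex1_line_through[OF assms(1-3)] by blast
  obtain l where l: "l \<in> L" "act (gain c q) l = lam"
    using act_gain_surj[OF \<open>(q, c) \<in> I\<close> \<open>lam \<in> L\<close>] by blast
  show ?thesis
    unfolding chain_3_MX_MZ_iff[OF \<open>p \<noteq> q\<close> c l] by simp
qed

lemma chain_3_MY_MZ_iff:
  assumes "(p, b) \<in> I" "lam \<in> L" "mu \<in> L" "mu \<noteq> act (gain b p) lam"
  shows "chain 3 (MY b lam) (MZ p mu) us \<longleftrightarrow>
    us = [MY b lam, MZ p (act (gain b p) lam), MX p, MZ p mu]"
proof
  assume "chain 3 (MY b lam) (MZ p mu) us"
  then obtain w x where us: "us = [MY b lam, w, x, MZ p mu]"
    and "adj w (MY b lam)" "adj x w" "adj (MZ p mu) x"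
    unfolding chain_3_iff by blast
  from \<open>adj w (MY b lam)\<close> obtain p' where w: "w = MZ p' (act (gain b p') lam)"
    and "p' \<in> P" "(p', b) \<in> I"
    by (cases w) auto
  have "x = MX p"
  proof (cases x)
    case (MX p'')
    with \<open>adj (MZ p mu) x\<close> show ?thesis
      by simp
  next
    case (MY c \<kappa>)
    have "c \<in> B" "(p', c) \<in> I" "(p, c) \<in> I" "\<kappa> \<in> L"
      and \<kappa>: "act (gain b p') lam = act (gain c p') \<kappa>" "mu = act (gain c p) \<kappa>"
      using \<open>adj x w\<close> \<open>adj (MZ p mu) x\<close> by (simp_all add: w MY)
    have "p' \<noteq> p"
      using \<kappa> assms(4) by auto
    moreover have "p \<in> P" "b \<in> B"
      using assms(1) incidence_subset by auto
    ultimately have "c = b"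
      using ex1_line_through[OF \<open>p' \<in> P\<close> \<open>p \<in> P\<close>] \<open>c \<in> B\<close> \<open>(p', c) \<in> I\<close> \<open>(p, c) \<in> I\<close>
        \<open>(p', b) \<in> I\<close> assms(1) by blast
    then have "\<kappa> = lam"
      using act_gain_inj[OF \<open>(p', b) \<in> I\<close> \<open>\<kappa> \<in> L\<close> assms(2)] \<kappa>(1) by simp
    with \<kappa>(2) \<open>c = b\<close> assms(4) show ?thesis
      by simp
  next
    case (MZ p'' \<nu>)
    with \<open>adj (MZ p mu) x\<close> show ?thesis
      by simp
  qed
  with us w \<open>adj x w\<close> show "us = [MY b lam, MZ p (act (gain b p) lam), MX p, MZ p mu]"
    by simp
next
  assume "us = [MY b lam, MZ p (act (gain b p) lam), MX p, MZ p mu]"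
  then show "chain 3 (MY b lam) (MZ p mu) us"
    using assms incidence_subset act_gain_closed unfolding chain_3_iff by auto
qed

end

theorem lemma3:
  fixes P :: "'p set" and B :: "'b set" and I :: "('p \<times> 'b) set"
    and G :: "('g, 'c) monoid_scheme" and gain :: "'b \<Rightarrow> 'p \<Rightarrow> 'g"
    and act :: "'g \<Rightarrow> 'l \<Rightarrow> 'l" and L :: "'l set"
  assumes "linear_space P B I"
    and "gain_function G P B I gain"
    and "group_action G L act"
    and "L \<noteq> {}"
    and "p \<in> P" and "q \<in> P" and "b \<in> B" and "lam \<in> L" and "mu \<in> L"
  shows
    "(p = q \<longrightarrow>
        M_dist P B I gain act L (MX p) (MZ q lam) = 1 \<and>
        (\<forall>us. M_chain P B I gain act L 1 (MX p) (MZ q lam) us \<longleftrightarrow> us = [MX p, MZ q lam])) \<and>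
     (p \<noteq> q \<longrightarrow>
        M_dist P B I gain act L (MX p) (MZ q lam) = 3 \<and>
        (\<exists>!us. M_chain P B I gain act L 3 (MX p) (MZ q lam) us)) \<and>
     ((p, b) \<in> I \<and> mu = act (gain b p) lam \<longrightarrow>
        M_dist P B I gain act L (MY b lam) (MZ p mu) = 1 \<and>
        (\<forall>us. M_chain P B I gain act L 1 (MY b lam) (MZ p mu) us \<longleftrightarrow> us = [MY b lam, MZ p mu])) \<and>
     ((p, b) \<in> I \<and> mu \<noteq> act (gain b p) lam \<longrightarrow>
        M_dist P B I gain act L (MY b lam) (MZ p mu) = 3 \<and>
        (\<exists>!us. M_chain P B I gain act L 3 (MY b lam) (MZ p mu) us))"
proof -
  interpret gain_M_construction P B I gain act L G
    using assms(1-3) by (rule gain_M_construction.intro)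
  have x_to_z: "mdist (MX p) (MZ q lam) = 3 \<and> (\<exists>!us. chain 3 (MX p) (MZ q lam) us)"
    if "p \<noteq> q"
    using ex1_chain_3_MX_MZ[OF assms(5,6) that assms(8)] mdist_eq_3[of "MX p" q lam] that
    by (auto dest: ex1_implies_ex)
  have y_to_z: "mdist (MY b lam) (MZ p mu) = 3 \<and> (\<exists>!us. chain 3 (MY b lam) (MZ p mu) us)"
    if "(p, b) \<in> I" "mu \<noteq> act (gain b p) lam"
    using chain_3_MY_MZ_iff[OF that(1) assms(8,9) that(2)] mdist_eq_3[of "MY b lam" p mu] that
    by auto
  show ?thesis
    using x_to_z y_to_z mdist_eq_1 assms by (auto simp del: One_nat_def simp: chain_1_iff)
qed

end
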